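(* Let $m\ge n\ge k$ be positive integers, $A\in\mathbb{R}^{m\times n}$ with $A^TA=I_n$, $x^*\in\mathbb{R}^n$ with support $S^*$, $|S^*|\le k$, and $y=Ax^*$. Then for every initialization $\mathcal{X}^0$, every $\eta>0$ and every $t\in\mathbb{N}$, the SEA iterates satisfy $\eta A^T(Ax^t-y)=u^t$.
   Context: $S^*=\{i:x^*_i\neq0\}$. For $v\in\mathbb{R}^n$, $\mathrm{largest}_k(v)$ is the set of indices of the $k$ entries of $v$ with largest absolute value (ties broken by selecting the highest indices). For $S\subseteq\{1,\dots,n\}$, $A_S$ is the submatrix of columns indexed by $S$, $v_S$ the restriction of a vector to $S$, $A_S^\dagger$ the Moore–Penrose pseudoinverse of $A_S$. SEA with initialization $\mathcal{X}^0$ and step size $\eta$ generates, for $t=0,1,2,\dots$: $S^t=\mathrm{largest}_k(\mathcal{X}^t)$; $x^t_i=0$ for $i\notin S^t$ and $x^t_{S^t}=A_{S^t}^\dagger y$; $\mathcal{X}^{t+1}=\mathcal{X}^t-\eta A^T(Ax^t-y)$. The oracle direction is $u^t_i=-\eta x^*_i$ if $i\in S^*\setminus S^t$ and $u^t_i=0$ otherwise. *)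

theory Defs
  imports "Jordan_Normal_Form.Matrix"
begin

text \<open>Vectors in R^n are JNF vectors of dimension n (indices 0..<n), matrices are JNF
matrices. Indices are natural numbers, so "highest index" refers to the usual order.\<close>

definition support_vec :: "real vec \<Rightarrow> nat set" where
  "support_vec v = {i. i < dim_vec v \<and> v $ i \<noteq> 0}"

definition largest_k :: "nat \<Rightarrow> real vec \<Rightarrow> nat set" where
  "largest_k k v = {i. i < dim_vec v \<and>
     card {j. j < dim_vec v \<and> (\<bar>v $ j\<bar> > \<bar>v $ i\<bar> \<or> (\<bar>v $ j\<bar> = \<bar>v $ i\<bar> \<and> j > i))} < k}"

definition col_submat :: "real mat \<Rightarrow> nat set \<Rightarrow> real mat" where
  "col_submat A S = mat (dim_row A) (card S) (\<lambda>(i,j). A $$ (i, sorted_list_of_set S ! j))"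

definition pinv :: "real mat \<Rightarrow> real mat" where
  "pinv M = (THE X. X \<in> carrier_mat (dim_col M) (dim_row M) \<and>
      M * X * M = M \<and> X * M * X = X \<and>
      transpose_mat (M * X) = M * X \<and> transpose_mat (X * M) = X * M)"

definition embed_vec :: "nat \<Rightarrow> nat set \<Rightarrow> real vec \<Rightarrow> real vec" where
  "embed_vec n S z = vec n (\<lambda>i. if i \<in> S then z $ card {j \<in> S. j < i} else 0)"

definition sea_S :: "nat \<Rightarrow> real vec \<Rightarrow> nat set" where
  "sea_S k X = largest_k k X"

definition sea_x :: "real mat \<Rightarrow> real vec \<Rightarrow> nat \<Rightarrow> real vec \<Rightarrow> real vec" where
  "sea_x A y k X = embed_vec (dim_col A) (sea_S k X) (pinv (col_submat A (sea_S k X)) *\<^sub>v y)"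

primrec sea_X :: "real mat \<Rightarrow> real vec \<Rightarrow> nat \<Rightarrow> real \<Rightarrow> real vec \<Rightarrow> nat \<Rightarrow> real vec" where
  "sea_X A y k \<eta> X0 0 = X0"
| "sea_X A y k \<eta> X0 (Suc t) =
     sea_X A y k \<eta> X0 t - \<eta> \<cdot>\<^sub>v (transpose_mat A *\<^sub>v (A *\<^sub>v sea_x A y k (sea_X A y k \<eta> X0 t) - y))"

definition sea_St :: "real mat \<Rightarrow> real vec \<Rightarrow> nat \<Rightarrow> real \<Rightarrow> real vec \<Rightarrow> nat \<Rightarrow> nat set" where
  "sea_St A y k \<eta> X0 t = sea_S k (sea_X A y k \<eta> X0 t)"

definition sea_xt :: "real mat \<Rightarrow> real vec \<Rightarrow> nat \<Rightarrow> real \<Rightarrow> real vec \<Rightarrow> nat \<Rightarrow> real vec" where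
  "sea_xt A y k \<eta> X0 t = sea_x A y k (sea_X A y k \<eta> X0 t)"

definition oracle_u :: "real mat \<Rightarrow> real vec \<Rightarrow> real vec \<Rightarrow> nat \<Rightarrow> real \<Rightarrow> real vec \<Rightarrow> nat \<Rightarrow> real vec" where
  "oracle_u A y xs k \<eta> X0 t = vec (dim_vec xs)
     (\<lambda>i. if i \<in> support_vec xs - sea_St A y k \<eta> X0 t then - \<eta> * xs $ i else 0)"

end

theory Submission
  imports Defs
begin

text \<open>Since \<open>A\<close> has orthonormal columns, so does every column submatrix \<open>A\<^sub>S\<close>; its
pseudoinverse is therefore its transpose, and \<open>x\<^sup>t\<close> is simply \<open>x\<^sup>*\<close> with the entries
outside \<open>S\<^sup>t\<close> set to zero. Then \<open>A\<^sup>T(Ax\<^sup>t - y) = A\<^sup>TA(x\<^sup>t - x\<^sup>*) = x\<^sup>t - x\<^sup>*\<close>,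
which vanishes on \<open>S\<^sup>t\<close> and equals \<open>-x\<^sup>*\<^sub>i\<close> off it. Nothing about \<open>S\<^sup>t\<close> is used
except \<open>S\<^sup>t \<subseteq> {0..<n}\<close>.\<close>

definition restrict_vec :: "nat set \<Rightarrow> real vec \<Rightarrow> real vec" where
  "restrict_vec S v = vec (dim_vec v) (\<lambda>i. if i \<in> S then v $ i else 0)"

lemma card_less_nth_sorted_list_of_set:
  fixes S :: "nat set"
  assumes "finite S" and "p < card S"
  shows "card {j \<in> S. j < sorted_list_of_set S ! p} = p"
proof -
  let ?L = "sorted_list_of_set S"
  have nth_less_iff: "?L ! q < ?L ! p \<longleftrightarrow> q < p" if "q < card S" for q
    using that assms(2) sorted_wrt_nth_less[OF strict_sorted_list_of_set]
    by (metis length_sorted_list_of_set nat_neq_iff order_less_asym)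
  have "{j \<in> S. j < ?L ! p} = (!) ?L ` {..<p}"
  proof (intro equalityI subsetI)
    fix j assume "j \<in> {j \<in> S. j < ?L ! p}"
    moreover have "j \<in> set ?L" using assms(1) calculation by simp
    ultimately obtain q where "q < card S" "j = ?L ! q" "j < ?L ! p"
      by (auto simp: in_set_conv_nth)
    then show "j \<in> (!) ?L ` {..<p}" using nth_less_iff by auto
  next
    fix j assume "j \<in> (!) ?L ` {..<p}"
    then show "j \<in> {j \<in> S. j < ?L ! p}"
      using assms nth_less_iff nth_mem[of _ ?L] by fastforce
  qed
  moreover have "inj_on ((!) ?L) {..<p}"
    using assms(2) by (auto simp: inj_on_def nth_eq_iff_index_eq)
  ultimately show ?thesis by (simp add: card_image)
qed

lemma nth_sorted_list_of_set_less:
  fixes S :: "nat set"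
  assumes "S \<subseteq> {..<n}" and "p < card S"
  shows "sorted_list_of_set S ! p < n"
proof -
  have "finite S" using assms(1) finite_subset by blast
  moreover have "sorted_list_of_set S ! p \<in> set (sorted_list_of_set S)"
    using assms(2) by (intro nth_mem) simp
  ultimately have "sorted_list_of_set S ! p \<in> S" by simp
  then show ?thesis using assms(1) by blast
qed

lemma embed_vec_nth_sorted_list_of_set:
  assumes "S \<subseteq> {..<n}" and "v \<in> carrier_vec n"
  shows "embed_vec n S (vec (card S) (\<lambda>p. v $ (sorted_list_of_set S ! p))) = restrict_vec S v"
proof (rule eq_vecI)
  fix i assume "i < dim_vec (restrict_vec S v)"
  then have i: "i < n" using assms(2) by (simp add: restrict_vec_def)
  have fin: "finite S" using assms(1) finite_subset by blast
  show "embed_vec n S (vec (card S) (\<lambda>p. v $ (sorted_list_of_set S ! p))) $ i = restrict_vec S v $ i"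
  proof (cases "i \<in> S")
    case True
    then obtain p where p: "p < card S" "i = sorted_list_of_set S ! p"
      using fin by (metis in_set_conv_nth length_sorted_list_of_set set_sorted_list_of_set)
    then show ?thesis
      using True i assms(2) card_less_nth_sorted_list_of_set[OF fin p(1)]
      by (simp add: embed_vec_def restrict_vec_def)
  qed (use i assms(2) in \<open>simp add: embed_vec_def restrict_vec_def\<close>)
qed (use assms(2) in \<open>simp add: embed_vec_def restrict_vec_def\<close>)

lemma dim_col_submat [simp]:
  "dim_row (col_submat A S) = dim_row A" "dim_col (col_submat A S) = card S"
  by (simp_all add: col_submat_def col_def)

lemma col_col_submat:
  assumes "j < card S"
  shows "col (col_submat A S) j = col A (sorted_list_of_set S ! j)"
  using assms by (intro eq_vecI) (simp_all add: col_submat_def col_def)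

lemma transpose_col_submat_mult_col_submat:
  assumes "S \<subseteq> {..<dim_col A}"
  shows "transpose_mat (col_submat A S) * col_submat A S =
    mat (card S) (card S) (\<lambda>(p, q). (transpose_mat A * A) $$ (sorted_list_of_set S ! p, sorted_list_of_set S ! q))"
  using nth_sorted_list_of_set_less[OF assms]
  by (intro eq_matI) (auto simp: col_col_submat)

lemma transpose_col_submat_mult_vec:
  assumes "S \<subseteq> {..<dim_col A}"
  shows "transpose_mat (col_submat A S) *\<^sub>v w =
    vec (card S) (\<lambda>p. (transpose_mat A *\<^sub>v w) $ (sorted_list_of_set S ! p))"
  using nth_sorted_list_of_set_less[OF assms]
  by (intro eq_vecI) (auto simp: col_col_submat)

lemma orthonormal_cols_col_submat:
  assumes "A \<in> carrier_mat m n" and "transpose_mat A * A = 1\<^sub>m n" and "S \<subseteq> {..<n}"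
  shows "transpose_mat (col_submat A S) * col_submat A S = 1\<^sub>m (card S)"
  using assms transpose_col_submat_mult_col_submat[of S A] nth_sorted_list_of_set_less[OF assms(3)]
  by (intro eq_matI) (auto simp: nth_eq_iff_index_eq)

lemma pinv_orthonormal_cols:
  fixes B :: "real mat"
  assumes B: "B \<in> carrier_mat r s" and orth: "transpose_mat B * B = 1\<^sub>m s"
  shows "pinv B = transpose_mat B"
  unfolding pinv_def
proof (rule the_equality)
  have Bt: "transpose_mat B \<in> carrier_mat s r" using B by simp
  have "B * transpose_mat B * B = B"
    using assoc_mult_mat[OF B Bt B] orth right_mult_one_mat[OF B] by simp
  moreover have "transpose_mat B * B * transpose_mat B = transpose_mat B"
    using orth left_mult_one_mat[OF Bt] by simp
  moreover have "transpose_mat (B * transpose_mat B) = B * transpose_mat B"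
    using transpose_mult[OF B Bt] by simp
  ultimately show "transpose_mat B \<in> carrier_mat (dim_col B) (dim_row B) \<and>
    B * transpose_mat B * B = B \<and> transpose_mat B * B * transpose_mat B = transpose_mat B \<and>
    transpose_mat (B * transpose_mat B) = B * transpose_mat B \<and>
    transpose_mat (transpose_mat B * B) = transpose_mat B * B"
    using B orth by simp
next
  fix X assume X: "X \<in> carrier_mat (dim_col B) (dim_row B) \<and>
      B * X * B = B \<and> X * B * X = X \<and>
      transpose_mat (B * X) = B * X \<and> transpose_mat (X * B) = X * B"
  then have Xc: "X \<in> carrier_mat s r" and BXB: "B * X * B = B"
    and BX_sym: "transpose_mat (B * X) = B * X" using B by auto
  have Bt: "transpose_mat B \<in> carrier_mat s r" using B by simp
  have Xt: "transpose_mat X \<in> carrier_mat r s" using Xc by simp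
  have XB: "X * B = 1\<^sub>m s"
  proof -
    have "1\<^sub>m s = transpose_mat B * (B * X * B)" using orth BXB by simp
    also have "\<dots> = (transpose_mat B * B) * (X * B)"
      using B Bt Xc by (simp add: assoc_mult_mat[OF Bt B mult_carrier_mat[OF Xc B]])
    also have "\<dots> = X * B" using orth B Xc by simp
    finally show ?thesis by simp
  qed
  have "X = (transpose_mat B * B) * X" using orth Xc by simp
  also have "\<dots> = transpose_mat B * transpose_mat (B * X)"
    using B Bt Xc BX_sym by simp
  also have "\<dots> = transpose_mat (X * B) * transpose_mat B"
    using B Bt Xc Xt by (simp add: transpose_mult)
  also have "\<dots> = transpose_mat B" using XB Bt by simp
  finally show "X = transpose_mat B" .
qed

lemma transpose_mult_mult_vec_orthonormal_cols:
  fixes A :: "real mat"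
  assumes "A \<in> carrier_mat m n" and "transpose_mat A * A = 1\<^sub>m n" and "v \<in> carrier_vec n"
  shows "transpose_mat A *\<^sub>v (A *\<^sub>v v) = v"
proof -
  have "transpose_mat A *\<^sub>v (A *\<^sub>v v) = (transpose_mat A * A) *\<^sub>v v"
    using assms by (intro assoc_mult_mat_vec[symmetric]) auto
  also have "\<dots> = v" unfolding assms(2) by (rule one_mult_mat_vec[OF assms(3)])
  finally show ?thesis .
qed

lemma embed_vec_pinv_col_submat_mult_vec:
  assumes A: "A \<in> carrier_mat m n" and orth: "transpose_mat A * A = 1\<^sub>m n"
    and S: "S \<subseteq> {..<n}" and v: "v \<in> carrier_vec n"
  shows "embed_vec n S (pinv (col_submat A S) *\<^sub>v (A *\<^sub>v v)) = restrict_vec S v"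
proof -
  have "col_submat A S \<in> carrier_mat m (card S)" using A by (intro carrier_matI) auto
  then have pinv: "pinv (col_submat A S) = transpose_mat (col_submat A S)"
    by (rule pinv_orthonormal_cols[OF _ orthonormal_cols_col_submat[OF A orth S]])
  have "transpose_mat (col_submat A S) *\<^sub>v (A *\<^sub>v v) =
      vec (card S) (\<lambda>p. (transpose_mat A *\<^sub>v (A *\<^sub>v v)) $ (sorted_list_of_set S ! p))"
    using A S by (intro transpose_col_submat_mult_vec) simp
  then show ?thesis
    unfolding pinv transpose_mult_mult_vec_orthonormal_cols[OF A orth v]
    by (simp only: embed_vec_nth_sorted_list_of_set[OF S v])
qed

lemma largest_k_subset: "largest_k k v \<subseteq> {..<dim_vec v}"
  by (auto simp: largest_k_def)

lemma sea_X_carrier: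
  assumes "A \<in> carrier_mat m n" and "X0 \<in> carrier_vec n"
  shows "sea_X A y k \<eta> X0 t \<in> carrier_vec n"
proof (induction t)
  case (Suc t)
  have "transpose_mat A *\<^sub>v (A *\<^sub>v sea_x A y k (sea_X A y k \<eta> X0 t) - y) \<in> carrier_vec n"
    using assms(1) by (intro carrier_vecI) simp
  then show ?case using Suc.IH by simp
qed (use assms(2) in simp)

theorem lemmaC8:
  fixes m n k :: nat and A :: "real mat" and xs y X0 :: "real vec" and \<eta> :: real
  assumes "0 < k" "k \<le> n" "n \<le> m"
    and "A \<in> carrier_mat m n"
    and "transpose_mat A * A = 1\<^sub>m n"
    and "xs \<in> carrier_vec n"
    and "card (support_vec xs) \<le> k"
    and "y = A *\<^sub>v xs"
    and "X0 \<in> carrier_vec n"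
    and "\<eta> > 0"
  shows "\<forall>t. \<eta> \<cdot>\<^sub>v (transpose_mat A *\<^sub>v (A *\<^sub>v sea_xt A y k \<eta> X0 t - y)) = oracle_u A y xs k \<eta> X0 t"
proof
  fix t
  note A = assms(4) and orth = assms(5) and xs = assms(6)
  define S where "S = sea_St A y k \<eta> X0 t"
  have S: "S \<subseteq> {..<n}"
    using largest_k_subset[of k "sea_X A y k \<eta> X0 t"] carrier_vecD[OF sea_X_carrier[OF A assms(9)]]
    by (simp add: S_def sea_St_def sea_S_def)
  have xt: "sea_xt A y k \<eta> X0 t = restrict_vec S xs"
    using embed_vec_pinv_col_submat_mult_vec[OF A orth S xs] A assms(8)
    by (simp add: sea_xt_def sea_x_def S_def sea_St_def)
  have restrict_carrier: "restrict_vec S xs \<in> carrier_vec n" using xs by (simp add: restrict_vec_def)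
  have "transpose_mat A *\<^sub>v (A *\<^sub>v sea_xt A y k \<eta> X0 t - y) = restrict_vec S xs - xs"
    using transpose_mult_mult_vec_orthonormal_cols[OF A orth, of "restrict_vec S xs - xs"]
    unfolding xt by (simp add: assms(8) mult_minus_distrib_mat_vec[OF A restrict_carrier xs] xs restrict_carrier)
  then show "\<eta> \<cdot>\<^sub>v (transpose_mat A *\<^sub>v (A *\<^sub>v sea_xt A y k \<eta> X0 t - y)) = oracle_u A y xs k \<eta> X0 t"
    using xs by (intro eq_vecI) (auto simp: oracle_u_def restrict_vec_def support_vec_def S_def)
qed

end
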